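(* Let $A$ be an integral domain with field of fractions $K$. Every sublocalization over $A$ is a localization of $A$ if and only if for each $x\in K\setminus A$ the ideal $\sqrt{(A:_A x)}$ is the radical of a principal ideal. Moreover, if each principal ideal of $A$ has only finitely many associated primes, then every sublocalization over $A$ is a localization of $A$ if and only if each associated prime of a principal ideal of $A$ is the radical of a principal ideal.
   Context: $(A:_A x)=\{a\in A: ax\in A\}$. An overring of $A$ is a subring of $K$ containing $A$; it is a localization of $A$ if it equals $S^{-1}A$ for a multiplicatively closed set $S$ of nonzero elements of $A$, and a sublocalization over $A$ if it is an intersection of localizations of $A$. A prime $P$ of $A$ is an associated prime of an ideal $I$ if there is $a\in A$ such that $P$ is a minimal prime over $(I:_A a)=\{r\in A: ra\in I\}$. *)

theory Defs
  imports Main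
begin

text \<open>An integral domain A is modelled as a subring of a field K (the type 'k)
  such that K is the field of fractions of A.\<close>

definition is_subring :: "'k::field set \<Rightarrow> bool" where
  "is_subring A \<longleftrightarrow> 0 \<in> A \<and> 1 \<in> A \<and>
     (\<forall>x\<in>A. \<forall>y\<in>A. x + y \<in> A \<and> x - y \<in> A \<and> x * y \<in> A)"

definition is_fraction_field_of :: "'k::field set \<Rightarrow> bool" where
  "is_fraction_field_of A \<longleftrightarrow> (\<forall>x::'k. \<exists>a\<in>A. \<exists>b\<in>A. b \<noteq> 0 \<and> x = a / b)"

definition is_ideal :: "'k::field set \<Rightarrow> 'k set \<Rightarrow> bool" where
  "is_ideal A I \<longleftrightarrow> I \<subseteq> A \<and> 0 \<in> I \<and> (\<forall>x\<in>I. \<forall>y\<in>I. x + y \<in> I) \<and>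
     (\<forall>r\<in>A. \<forall>x\<in>I. r * x \<in> I)"

definition principal_ideal :: "'k::field set \<Rightarrow> 'k \<Rightarrow> 'k set" where
  "principal_ideal A a = {a * r | r. r \<in> A}"

definition radical :: "'k::field set \<Rightarrow> 'k set \<Rightarrow> 'k set" where
  "radical A I = {r \<in> A. \<exists>n::nat. r ^ n \<in> I}"

definition elt_colon :: "'k::field set \<Rightarrow> 'k \<Rightarrow> 'k set" where
  "elt_colon A x = {a \<in> A. a * x \<in> A}"

definition ideal_colon :: "'k::field set \<Rightarrow> 'k set \<Rightarrow> 'k \<Rightarrow> 'k set" where
  "ideal_colon A I a = {r \<in> A. r * a \<in> I}"

definition is_prime_ideal :: "'k::field set \<Rightarrow> 'k set \<Rightarrow> bool" where
  "is_prime_ideal A P \<longleftrightarrow> is_ideal A P \<and> P \<noteq> A \<and>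
     (\<forall>x\<in>A. \<forall>y\<in>A. x * y \<in> P \<longrightarrow> x \<in> P \<or> y \<in> P)"

definition minimal_prime_over :: "'k::field set \<Rightarrow> 'k set \<Rightarrow> 'k set \<Rightarrow> bool" where
  "minimal_prime_over A I P \<longleftrightarrow> is_prime_ideal A P \<and> I \<subseteq> P \<and>
     (\<forall>Q. is_prime_ideal A Q \<and> I \<subseteq> Q \<and> Q \<subseteq> P \<longrightarrow> Q = P)"

definition associated_prime :: "'k::field set \<Rightarrow> 'k set \<Rightarrow> 'k set \<Rightarrow> bool" where
  "associated_prime A I P \<longleftrightarrow> (\<exists>a\<in>A. minimal_prime_over A (ideal_colon A I a) P)"

definition mult_closed_nonzero :: "'k::field set \<Rightarrow> 'k set \<Rightarrow> bool" where
  "mult_closed_nonzero A S \<longleftrightarrow> S \<subseteq> A - {0} \<and> 1 \<in> S \<and> (\<forall>s\<in>S. \<forall>t\<in>S. s * t \<in> S)"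

definition localization :: "'k::field set \<Rightarrow> 'k set \<Rightarrow> 'k set" where
  "localization A S = {a / s | a s. a \<in> A \<and> s \<in> S}"

definition is_localization :: "'k::field set \<Rightarrow> 'k set \<Rightarrow> bool" where
  "is_localization A B \<longleftrightarrow> (\<exists>S. mult_closed_nonzero A S \<and> B = localization A S)"

definition is_sublocalization :: "'k::field set \<Rightarrow> 'k set \<Rightarrow> bool" where
  "is_sublocalization A B \<longleftrightarrow> (\<exists>F. (\<forall>C\<in>F. is_localization A C) \<and> B = \<Inter>F)"

end

theory Submission
  imports Defs
begin

text \<open>
  Let B be an intersection of localizations A[T^-1] and S the set of nonzero s in A with 1/s in B;
  B is a localization exactly when B = A[S^-1]. If x is in B and rad (A : x) = rad (aA), then some
  a^k x lies in A, and a is invertible in each A[T^-1] containing x, since a denominator t in T of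
  x lies in (A : x) and so has a power in aA; hence x is in A[S^-1]. Conversely, if the
  intersection of the A[s^-1] over nonzero s in (A : x) is a localization A[T^-1], a denominator
  t in T of x is invertible in each A[s^-1], so (A : x) lies in rad (tA) and the radicals agree.

  For x = b/a the ideal (A : x) is (aA : b), so the minimal primes over (A : x) are associated
  primes of aA. If they are finitely many and each is rad (u_P A), then rad (A : x), the
  intersection of the minimal primes, is the radical of the product of the u_P. Conversely, for P
  minimal over (A : x) choose c outside P but in all other minimal primes. The radicals
  rad (A : c^m x) increase with m, stay inside P and exhaust P; being intersections of associated
  primes of aA they take finitely many values, so P = rad (A : c^M x) for some M, and c^M x is
  not in A.
\<close>

section \<open>Ideals of a subring of a field\<close>

lemma ideal_subset: "is_ideal A I \<Longrightarrow> I \<subseteq> A"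
  by (simp add: is_ideal_def)

lemma ideal_zero: "is_ideal A I \<Longrightarrow> 0 \<in> I"
  by (simp add: is_ideal_def)

lemma ideal_add: "is_ideal A I \<Longrightarrow> x \<in> I \<Longrightarrow> y \<in> I \<Longrightarrow> x + y \<in> I"
  by (simp add: is_ideal_def)

lemma ideal_mult_left: "is_ideal A I \<Longrightarrow> r \<in> A \<Longrightarrow> x \<in> I \<Longrightarrow> r * x \<in> I"
  by (simp add: is_ideal_def)

lemma ideal_mult_right: "is_ideal A I \<Longrightarrow> r \<in> A \<Longrightarrow> x \<in> I \<Longrightarrow> x * r \<in> I"
  by (metis ideal_mult_left mult.commute)

lemma prime_ideal_is_ideal: "is_prime_ideal A P \<Longrightarrow> is_ideal A P"
  by (simp add: is_prime_ideal_def)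

lemma prime_ideal_mult:
  "is_prime_ideal A P \<Longrightarrow> x \<in> A \<Longrightarrow> y \<in> A \<Longrightarrow> x * y \<in> P \<Longrightarrow> x \<in> P \<or> y \<in> P"
  by (simp add: is_prime_ideal_def)

lemma subset_radical: "I \<subseteq> A \<Longrightarrow> I \<subseteq> radical A I"
  by (auto simp: radical_def intro!: exI[of _ "1::nat"])

locale subring_of_field =
  fixes A :: "'k::field set"
  assumes subring: "is_subring A"

context subring_of_field
begin

lemma subring_zero: "0 \<in> A"
  using subring by (simp add: is_subring_def)

lemma subring_one: "1 \<in> A"
  using subring by (simp add: is_subring_def)

lemma subring_add: "x \<in> A \<Longrightarrow> y \<in> A \<Longrightarrow> x + y \<in> A"
  using subring by (simp add: is_subring_def)

lemma subring_mult: "x \<in> A \<Longrightarrow> y \<in> A \<Longrightarrow> x * y \<in> A"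
  using subring by (simp add: is_subring_def)

lemma subring_power: "x \<in> A \<Longrightarrow> x ^ n \<in> A"
  by (induction n) (simp_all add: subring_one subring_mult)

lemma subring_prod: "(\<And>i. i \<in> I \<Longrightarrow> f i \<in> A) \<Longrightarrow> prod f I \<in> A"
  by (induction I rule: infinite_finite_induct) (simp_all add: subring_one subring_mult)

lemma prime_ideal_one_notin: "is_prime_ideal A P \<Longrightarrow> 1 \<notin> P"
  using ideal_mult_right[OF prime_ideal_is_ideal, of A P _ 1] ideal_subset[OF prime_ideal_is_ideal]
  by (force simp: is_prime_ideal_def)

lemma prime_ideal_power:
  assumes "is_prime_ideal A P" and "x \<in> A" and "x ^ n \<in> P"
  shows "x \<in> P"
  using assms(3)
proof (induction n)
  case 0
  then show ?case
    using prime_ideal_one_notin[OF assms(1)] by simp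
next
  case (Suc n)
  then show ?case
    using prime_ideal_mult[OF assms(1,2) subring_power[OF assms(2)]] by auto
qed

lemma prime_ideal_prod_notin:
  assumes "is_prime_ideal A P" and "finite I" and "\<And>i. i \<in> I \<Longrightarrow> f i \<in> A - P"
  shows "prod f I \<notin> P"
  using assms(2,3)
proof (induction I rule: finite_induct)
  case empty
  then show ?case
    using prime_ideal_one_notin[OF assms(1)] by simp
next
  case (insert i I)
  then show ?case
    using prime_ideal_mult[OF assms(1), of "f i" "prod f I"] subring_prod[of I f] by auto
qed

lemma exists_mem_Inter_notin_prime:
  assumes "is_prime_ideal A P" and "finite \<Q>"
    and "\<And>Q. Q \<in> \<Q> \<Longrightarrow> is_ideal A Q" and "\<And>Q. Q \<in> \<Q> \<Longrightarrow> \<not> Q \<subseteq> P"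
  shows "\<exists>c\<in>A - P. \<forall>Q\<in>\<Q>. c \<in> Q"
proof -
  have "\<forall>Q\<in>\<Q>. \<exists>c. c \<in> Q - P"
    using assms(4) by blast
  then obtain g where g: "\<And>Q. Q \<in> \<Q> \<Longrightarrow> g Q \<in> Q - P"
    by metis
  then have g_A: "\<And>Q. Q \<in> \<Q> \<Longrightarrow> g Q \<in> A - P"
    using assms(3) ideal_subset by blast
  have "prod g \<Q> \<in> Q" if "Q \<in> \<Q>" for Q
  proof -
    have "prod g (\<Q> - {Q}) \<in> A"
      using g_A by (intro subring_prod) blast
    then have "g Q * prod g (\<Q> - {Q}) \<in> Q"
      using ideal_mult_right[OF assms(3)[OF that]] g[OF that] by blast
    moreover have "prod g \<Q> = g Q * prod g (\<Q> - {Q})"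
      using assms(2) that by (simp add: prod.remove)
    ultimately show ?thesis
      by simp
  qed
  moreover have "prod g \<Q> \<in> A"
    using g_A by (intro subring_prod) blast
  moreover have "prod g \<Q> \<notin> P"
    using prime_ideal_prod_notin[OF assms(1,2) g_A] .
  ultimately show ?thesis
    by blast
qed

lemma zero_is_prime_ideal: "is_prime_ideal A {0}"
  using subring_zero subring_one by (auto simp: is_prime_ideal_def is_ideal_def)

lemma elt_colon_is_ideal: "is_ideal A (elt_colon A x)"
  using subring_zero subring_add subring_mult
  by (auto simp: is_ideal_def elt_colon_def distrib_right mult.assoc)

lemma mem_principal_ideal_self: "a \<in> principal_ideal A a"
  using subring_one mult_1_right[of a] by (force simp: principal_ideal_def)

lemma principal_ideal_subset: "a \<in> A \<Longrightarrow> principal_ideal A a \<subseteq> A"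
  using subring_mult by (auto simp: principal_ideal_def)

lemma radical_subset_prime: "is_prime_ideal A P \<Longrightarrow> J \<subseteq> P \<Longrightarrow> radical A J \<subseteq> P"
  using prime_ideal_power by (auto simp: radical_def)

end

section \<open>Radicals as intersections of minimal primes\<close>

context subring_of_field
begin

lemma ideal_Union_chain:
  assumes "\<C> \<noteq> {}" and "\<And>I. I \<in> \<C> \<Longrightarrow> is_ideal A I"
    and chain: "\<And>I J. I \<in> \<C> \<Longrightarrow> J \<in> \<C> \<Longrightarrow> I \<subseteq> J \<or> J \<subseteq> I"
  shows "is_ideal A (\<Union>\<C>)"
  unfolding is_ideal_def
proof (intro conjI ballI)
  show "\<Union>\<C> \<subseteq> A"
    using assms(2) ideal_subset by blast
  show "0 \<in> \<Union>\<C>"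
    using assms(1,2) ideal_zero by blast
next
  fix x y assume "x \<in> \<Union>\<C>" "y \<in> \<Union>\<C>"
  then obtain I J where "I \<in> \<C>" "J \<in> \<C>" "x \<in> I" "y \<in> J"
    by blast
  then show "x + y \<in> \<Union>\<C>"
    using chain[of I J] assms(2) ideal_add by blast
next
  fix r x assume "r \<in> A" "x \<in> \<Union>\<C>"
  then show "r * x \<in> \<Union>\<C>"
    using assms(2) ideal_mult_left by blast
qed

lemma ideal_add_principal:
  assumes "is_ideal A I" and "x \<in> A"
  defines "J \<equiv> {i + x * a | i a. i \<in> I \<and> a \<in> A}"
  shows "is_ideal A J" and "I \<subseteq> J" and "x \<in> J"
proof -
  show "I \<subseteq> J"
  proof
    fix i assume "i \<in> I"
    moreover have "i = i + x * 0"
      by simp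
    ultimately show "i \<in> J"
      unfolding J_def using subring_zero by blast
  qed
  have "x = 0 + x * 1"
    by simp
  then show "x \<in> J"
    unfolding J_def using ideal_zero[OF assms(1)] subring_one by blast
  show "is_ideal A J"
    unfolding is_ideal_def
  proof (intro conjI ballI)
    show "J \<subseteq> A"
      unfolding J_def using assms(1,2) ideal_subset subring_add subring_mult by blast
    show "0 \<in> J"
      using \<open>I \<subseteq> J\<close> ideal_zero[OF assms(1)] by blast
  next
    fix y z assume "y \<in> J" "z \<in> J"
    then obtain i a i' a' where "y = i + x * a" "z = i' + x * a'" "i \<in> I" "i' \<in> I" "a \<in> A" "a' \<in> A"
      unfolding J_def by blast
    moreover have "i + x * a + (i' + x * a') = (i + i') + x * (a + a')"
      by (simp add: algebra_simps)
    ultimately show "y + z \<in> J"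
      unfolding J_def using ideal_add[OF assms(1)] subring_add by blast
  next
    fix r y assume "r \<in> A" "y \<in> J"
    then obtain i a where "y = i + x * a" "i \<in> I" "a \<in> A"
      unfolding J_def by blast
    moreover have "r * (i + x * a) = r * i + x * (r * a)"
      by (simp add: algebra_simps)
    ultimately show "r * y \<in> J"
      unfolding J_def using ideal_mult_left[OF assms(1)] subring_mult \<open>r \<in> A\<close> by blast
  qed
qed

lemma maximal_ideal_avoiding_powers_is_prime:
  assumes M: "is_ideal A M" "\<And>n. r ^ n \<notin> M"
    and M_max: "\<And>I. is_ideal A I \<Longrightarrow> M \<subseteq> I \<Longrightarrow> \<forall>n. r ^ n \<notin> I \<Longrightarrow> I = M"
  shows "is_prime_ideal A M"
proof -
  have outside: "\<exists>n i a. i \<in> M \<and> a \<in> A \<and> r ^ n = i + y * a" if "y \<in> A" "y \<notin> M" for y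
  proof (rule ccontr)
    define N where "N = {i + y * a | i a. i \<in> M \<and> a \<in> A}"
    assume "\<not> ?thesis"
    then have "\<forall>n. r ^ n \<notin> N"
      unfolding N_def by blast
    then have "N = M"
      using M_max ideal_add_principal(1,2)[OF M(1) \<open>y \<in> A\<close>] unfolding N_def by blast
    then show False
      using ideal_add_principal(3)[OF M(1) \<open>y \<in> A\<close>] \<open>y \<notin> M\<close> by (simp add: N_def)
  qed
  have "y \<in> M \<or> z \<in> M" if yz: "y \<in> A" "z \<in> A" "y * z \<in> M" for y z
  proof (rule ccontr)
    assume "\<not> (y \<in> M \<or> z \<in> M)"
    then obtain n i a m j b where
      ij: "i \<in> M" "a \<in> A" "r ^ n = i + y * a" "j \<in> M" "b \<in> A" "r ^ m = j + z * b"
      using outside[of y] outside[of z] yz by blast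
    have "r ^ (n + m) = i * (j + z * b) + j * (y * a) + (y * z) * (a * b)"
      unfolding power_add ij by (simp add: algebra_simps)
    moreover have "i * (j + z * b) \<in> M" "j * (y * a) \<in> M" "(y * z) * (a * b) \<in> M"
      using ij yz ideal_subset[OF M(1)]
      by (auto intro!: ideal_mult_right[OF M(1)] subring_add subring_mult)
    ultimately have "r ^ (n + m) \<in> M"
      by (metis ideal_add[OF M(1)])
    then show False
      using M(2) by blast
  qed
  moreover have "M \<noteq> A"
    using M(2)[of 0] subring_one by auto
  ultimately show ?thesis
    using M(1) by (auto simp: is_prime_ideal_def)
qed

lemma exists_prime_ideal_not_mem:
  assumes "is_ideal A J" and "r \<in> A" and "r \<notin> radical A J"
  shows "\<exists>Q. is_prime_ideal A Q \<and> J \<subseteq> Q \<and> r \<notin> Q"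
proof -
  define \<S> where "\<S> = {I. is_ideal A I \<and> J \<subseteq> I \<and> (\<forall>n. r ^ n \<notin> I)}"
  have "J \<in> \<S>"
    using assms by (auto simp: \<S>_def radical_def)
  moreover have "\<Union>\<C> \<in> \<S>" if "\<C> \<noteq> {}" "subset.chain \<S> \<C>" for \<C>
    using that ideal_Union_chain[of \<C>] by (auto simp: \<S>_def subset_chain_def)
  ultimately obtain M where "M \<in> \<S>" and M_max: "\<And>I. I \<in> \<S> \<Longrightarrow> M \<subseteq> I \<Longrightarrow> I = M"
    using subset_Zorn_nonempty[of \<S>] by blast
  then have M: "is_ideal A M" "J \<subseteq> M" "\<And>n. r ^ n \<notin> M"
    by (auto simp: \<S>_def)
  have "is_prime_ideal A M"
  proof (rule maximal_ideal_avoiding_powers_is_prime[OF M(1,3)])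
    fix I assume "is_ideal A I" "M \<subseteq> I" "\<forall>n. r ^ n \<notin> I"
    then show "I = M"
      using M_max M(2) unfolding \<S>_def by blast
  qed
  moreover have "r \<notin> M"
    using M(3)[of 1] by simp
  ultimately show ?thesis
    using M(2) by blast
qed

lemma prime_ideal_Inter_chain:
  assumes "\<C> \<noteq> {}" and "\<And>P. P \<in> \<C> \<Longrightarrow> is_prime_ideal A P"
    and chain: "\<And>P Q. P \<in> \<C> \<Longrightarrow> Q \<in> \<C> \<Longrightarrow> P \<subseteq> Q \<or> Q \<subseteq> P"
  shows "is_prime_ideal A (\<Inter>\<C>)"
proof -
  obtain P0 where "P0 \<in> \<C>"
    using assms(1) by blast
  have ideals: "\<And>P. P \<in> \<C> \<Longrightarrow> is_ideal A P"
    using assms(2) prime_ideal_is_ideal by blast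
  have "is_ideal A (\<Inter>\<C>)"
    unfolding is_ideal_def
  proof (intro conjI ballI)
    show "\<Inter>\<C> \<subseteq> A"
      using \<open>P0 \<in> \<C>\<close> ideal_subset[OF ideals] by blast
    show "0 \<in> \<Inter>\<C>"
      using ideal_zero[OF ideals] by blast
    show "x + y \<in> \<Inter>\<C>" if "x \<in> \<Inter>\<C>" "y \<in> \<Inter>\<C>" for x y
      using that ideal_add[OF ideals] by blast
    show "r * x \<in> \<Inter>\<C>" if "r \<in> A" "x \<in> \<Inter>\<C>" for r x
      using that ideal_mult_left[OF ideals] by blast
  qed
  moreover have "1 \<notin> \<Inter>\<C>"
    using \<open>P0 \<in> \<C>\<close> assms(2) prime_ideal_one_notin by blast
  moreover have "x \<in> \<Inter>\<C> \<or> y \<in> \<Inter>\<C>" if "x \<in> A" "y \<in> A" "x * y \<in> \<Inter>\<C>" for x y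
  proof (rule ccontr)
    assume "\<not> ?thesis"
    then obtain P Q where "P \<in> \<C>" "x \<notin> P" "Q \<in> \<C>" "y \<notin> Q"
      by blast
    then show False
      using chain[of P Q] that prime_ideal_mult[OF assms(2)] by blast
  qed
  ultimately show ?thesis
    using subring_one by (auto simp: is_prime_ideal_def)
qed

lemma exists_minimal_prime_below:
  assumes "is_prime_ideal A Q" and "J \<subseteq> Q"
  shows "\<exists>P. minimal_prime_over A J P \<and> P \<subseteq> Q"
proof -
  define \<P> where "\<P> = {P. is_prime_ideal A P \<and> J \<subseteq> P \<and> P \<subseteq> Q}"
  have po: "partial_order_on \<P> (relation_of (\<lambda>P P'. P' \<subseteq> P) \<P>)"
    by (rule partial_order_on_relation_ofI) auto
  have chains: "\<exists>L\<in>\<P>. \<forall>P\<in>\<C>. L \<subseteq> P"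
    if "\<C> \<in> Chains (relation_of (\<lambda>P P'. P' \<subseteq> P) \<P>)" for \<C>
  proof (cases "\<C> = {}")
    case True
    then show ?thesis
      using assms by (auto simp: \<P>_def)
  next
    case False
    have "\<C> \<subseteq> \<P>"
      using Chains_relation_of[OF that] .
    moreover have "P \<subseteq> P' \<or> P' \<subseteq> P" if "P \<in> \<C>" "P' \<in> \<C>" for P P'
      using \<open>\<C> \<in> Chains _\<close> that by (auto simp: Chains_def relation_of_def)
    ultimately have "\<Inter>\<C> \<in> \<P>"
      using False prime_ideal_Inter_chain[of \<C>] unfolding \<P>_def by blast
    then show ?thesis
      by blast
  qed
  obtain P where P: "P \<in> \<P>" and P_min: "\<forall>P'\<in>\<P>. P' \<subseteq> P \<longrightarrow> P' = P"
    using predicate_Zorn[OF po chains] by blast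
  have "minimal_prime_over A J P"
    unfolding minimal_prime_over_def
  proof (intro conjI allI impI)
    show "is_prime_ideal A P" "J \<subseteq> P"
      using P by (simp_all add: \<P>_def)
    fix P' assume P': "is_prime_ideal A P' \<and> J \<subseteq> P' \<and> P' \<subseteq> P"
    then have "P' \<in> \<P>"
      using P by (auto simp: \<P>_def)
    then show "P' = P"
      using P_min P' by blast
  qed
  then show ?thesis
    using P unfolding \<P>_def by blast
qed

lemma radical_eq_Inter_minimal_primes:
  assumes "is_ideal A J"
  shows "radical A J = A \<inter> \<Inter>{P. minimal_prime_over A J P}"
proof
  show "radical A J \<subseteq> A \<inter> \<Inter>{P. minimal_prime_over A J P}"
    using radical_subset_prime by (auto simp: radical_def minimal_prime_over_def)
  show "A \<inter> \<Inter>{P. minimal_prime_over A J P} \<subseteq> radical A J"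
  proof (rule subsetI, rule ccontr)
    fix r assume r: "r \<in> A \<inter> \<Inter>{P. minimal_prime_over A J P}" "r \<notin> radical A J"
    obtain Q where "is_prime_ideal A Q" "J \<subseteq> Q" "r \<notin> Q"
      using exists_prime_ideal_not_mem[OF assms] r by blast
    then obtain P where "minimal_prime_over A J P" "P \<subseteq> Q"
      using exists_minimal_prime_below by blast
    then show False
      using r \<open>r \<notin> Q\<close> by blast
  qed
qed

lemma exists_mem_other_minimal_primes:
  assumes "finite {Q. minimal_prime_over A J Q}" and P: "minimal_prime_over A J P"
  shows "\<exists>c\<in>A - P. \<forall>Q. minimal_prime_over A J Q \<longrightarrow> Q \<noteq> P \<longrightarrow> c \<in> Q"
proof -
  define \<Q> where "\<Q> = {Q. minimal_prime_over A J Q} - {P}"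
  have "finite \<Q>"
    using assms(1) by (simp add: \<Q>_def)
  moreover have "\<And>Q. Q \<in> \<Q> \<Longrightarrow> is_ideal A Q"
    using prime_ideal_is_ideal by (auto simp: \<Q>_def minimal_prime_over_def)
  moreover have "\<And>Q. Q \<in> \<Q> \<Longrightarrow> \<not> Q \<subseteq> P"
    using P unfolding \<Q>_def minimal_prime_over_def by blast
  moreover have "is_prime_ideal A P"
    using P by (simp add: minimal_prime_over_def)
  ultimately obtain c where "c \<in> A - P" "\<forall>Q\<in>\<Q>. c \<in> Q"
    using exists_mem_Inter_notin_prime by metis
  then show ?thesis
    unfolding \<Q>_def by blast
qed

end

section \<open>Localizations and sublocalizations\<close>

lemma mult_closed_nonzeroD: "mult_closed_nonzero A S \<Longrightarrow> s \<in> S \<Longrightarrow> s \<in> A \<and> s \<noteq> 0"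
  by (auto simp: mult_closed_nonzero_def)

lemma mult_closed_power: "mult_closed_nonzero A S \<Longrightarrow> s \<in> S \<Longrightarrow> s ^ n \<in> S"
  by (induction n) (auto simp: mult_closed_nonzero_def)

lemma subset_localization: "mult_closed_nonzero A S \<Longrightarrow> A \<subseteq> localization A S"
  unfolding localization_def mult_closed_nonzero_def by force

lemma localization_denominator:
  assumes "mult_closed_nonzero A S" and "x \<in> localization A S"
  shows "\<exists>s\<in>S. s \<in> elt_colon A x"
proof -
  obtain a s where "x = a / s" "a \<in> A" "s \<in> S"
    using assms(2) by (auto simp: localization_def)
  moreover have "s \<in> A" "s \<noteq> 0"
    using mult_closed_nonzeroD[OF assms(1) \<open>s \<in> S\<close>] by auto
  ultimately show ?thesis
    by (auto simp: elt_colon_def)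
qed

lemma mem_localization_powers:
  assumes "s \<in> elt_colon A x" and "s \<noteq> 0"
  shows "x \<in> localization A (range ((^) s))"
proof -
  have "x = (s * x) / s ^ 1"
    using \<open>s \<noteq> 0\<close> by simp
  then show ?thesis
    using assms unfolding localization_def elt_colon_def by blast
qed

lemma subset_sublocalization: "is_sublocalization A B \<Longrightarrow> A \<subseteq> B"
  using subset_localization by (fastforce simp: is_sublocalization_def is_localization_def)

lemma mem_localization_if_mem_radical:
  assumes "mult_closed_nonzero A S" and "a \<in> S" and "a \<in> radical A (elt_colon A x)"
  shows "x \<in> localization A S"
proof -
  obtain k where "a ^ k * x \<in> A"
    using assms(3) by (auto simp: radical_def elt_colon_def)
  moreover have "a ^ k \<in> S" "a ^ k \<noteq> 0"
    using mult_closed_power[OF assms(1,2)] mult_closed_nonzeroD[OF assms(1)] by blast+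
  moreover have "x = (a ^ k * x) / a ^ k"
    using \<open>a ^ k \<noteq> 0\<close> by simp
  ultimately show ?thesis
    unfolding localization_def by blast
qed

lemma inverse_mem_localization:
  assumes "mult_closed_nonzero A S" and "x \<in> localization A S" and "a \<noteq> 0"
    and "elt_colon A x \<subseteq> radical A (principal_ideal A a)"
  shows "1 / a \<in> localization A S"
proof -
  obtain t where "t \<in> S" "t \<in> elt_colon A x"
    using localization_denominator[OF assms(1,2)] by blast
  then obtain m c where "t ^ m = a * c" "c \<in> A"
    using assms(4) by (auto simp: radical_def principal_ideal_def)
  moreover have "t ^ m \<in> S" "t ^ m \<noteq> 0"
    using mult_closed_power[OF assms(1) \<open>t \<in> S\<close>] mult_closed_nonzeroD[OF assms(1)] by blast+
  moreover have "1 / a = c / t ^ m"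
    using calculation assms(3) by (auto simp: field_simps)
  ultimately show ?thesis
    unfolding localization_def by blast
qed

lemma inverse_mem_sublocalization:
  assumes "is_sublocalization A B" and "x \<in> B" and "a \<noteq> 0"
    and "elt_colon A x \<subseteq> radical A (principal_ideal A a)"
  shows "1 / a \<in> B"
  using assms inverse_mem_localization
  by (fastforce simp: is_sublocalization_def is_localization_def)

context subring_of_field
begin

lemma localization_mult:
  assumes "mult_closed_nonzero A S" and "x \<in> localization A S" and "y \<in> localization A S"
  shows "x * y \<in> localization A S"
proof -
  obtain a s b t where "x = a / s" "y = b / t" "a \<in> A" "b \<in> A" "s \<in> S" "t \<in> S"
    using assms(2,3) by (auto simp: localization_def)
  moreover have "x * y = (a * b) / (s * t)"
    using calculation by simp
  ultimately show ?thesis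
    using assms(1) subring_mult unfolding localization_def mult_closed_nonzero_def by blast
qed

lemma sublocalization_mult:
  "is_sublocalization A B \<Longrightarrow> x \<in> B \<Longrightarrow> y \<in> B \<Longrightarrow> x * y \<in> B"
  using localization_mult by (fastforce simp: is_sublocalization_def is_localization_def)

lemma mult_closed_powers:
  assumes "s \<in> A" and "s \<noteq> 0"
  shows "mult_closed_nonzero A (range ((^) s))"
  unfolding mult_closed_nonzero_def
proof (intro conjI ballI)
  show "range ((^) s) \<subseteq> A - {0}"
    using assms subring_power by auto
  show "1 \<in> range ((^) s)"
    using power_0[of s, symmetric] by blast
  show "u * v \<in> range ((^) s)" if "u \<in> range ((^) s)" "v \<in> range ((^) s)" for u v
    using that by (auto simp flip: power_add)
qed

lemma radical_eq_radical_principal: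
  assumes "is_ideal A J" and "t \<in> J" and "J \<subseteq> radical A (principal_ideal A t)"
  shows "radical A J = radical A (principal_ideal A t)"
proof
  show "radical A J \<subseteq> radical A (principal_ideal A t)"
  proof
    fix r assume "r \<in> radical A J"
    then obtain n where "r \<in> A" "r ^ n \<in> J"
      by (auto simp: radical_def)
    then obtain m where "(r ^ n) ^ m \<in> principal_ideal A t"
      using assms(3) by (auto simp: radical_def)
    then show "r \<in> radical A (principal_ideal A t)"
      using \<open>r \<in> A\<close> by (auto simp: radical_def simp flip: power_mult)
  qed
  show "radical A (principal_ideal A t) \<subseteq> radical A J"
  proof
    fix r assume "r \<in> radical A (principal_ideal A t)"
    then obtain n c where "r \<in> A" "r ^ n = t * c" "c \<in> A"
      by (auto simp: radical_def principal_ideal_def)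
    then have "r ^ n \<in> J"
      using ideal_mult_right[OF assms(1) \<open>c \<in> A\<close> assms(2)] by simp
    then show "r \<in> radical A J"
      using \<open>r \<in> A\<close> by (auto simp: radical_def)
  qed
qed

lemma is_localization_if_radical_elt_colon_principal:
  assumes "is_fraction_field_of A"
    and rad: "\<And>x. x \<notin> A \<Longrightarrow> \<exists>a\<in>A. radical A (elt_colon A x) = radical A (principal_ideal A a)"
    and B: "is_sublocalization A B"
  shows "is_localization A B"
proof -
  define S where "S = {s \<in> A. s \<noteq> 0 \<and> 1 / s \<in> B}"
  have S: "mult_closed_nonzero A S"
    using subring_one subring_mult subset_sublocalization[OF B] sublocalization_mult[OF B, of "1 / _"]
    by (fastforce simp: mult_closed_nonzero_def S_def)
  have "localization A S \<subseteq> B"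
    using subset_sublocalization[OF B] sublocalization_mult[OF B, of _ "1 / _"]
    by (fastforce simp: localization_def S_def)
  moreover have "x \<in> localization A S" if "x \<in> B" for x
  proof (cases "x \<in> A")
    case True
    then show ?thesis
      using subset_localization[OF S] by blast
  next
    case False
    then obtain a where "a \<in> A" and rad_x: "radical A (elt_colon A x) = radical A (principal_ideal A a)"
      using rad by blast
    obtain p q where "p \<in> A" "q \<in> A" "q \<noteq> 0" "x = p / q"
      using assms(1) unfolding is_fraction_field_of_def by blast
    then have "q \<in> radical A (elt_colon A x)"
      using subset_radical[of "elt_colon A x" A] by (auto simp: elt_colon_def)
    then have "a \<noteq> 0"
      using rad_x \<open>q \<noteq> 0\<close> by (auto simp: radical_def principal_ideal_def)
    moreover have "1 / a \<in> B"
      using inverse_mem_sublocalization[OF B \<open>x \<in> B\<close> \<open>a \<noteq> 0\<close>] rad_x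
        subset_radical[of "elt_colon A x" A] by (auto simp: elt_colon_def)
    ultimately have "a \<in> S"
      using \<open>a \<in> A\<close> by (simp add: S_def)
    moreover have "a \<in> radical A (elt_colon A x)"
      using rad_x subset_radical[OF principal_ideal_subset] mem_principal_ideal_self \<open>a \<in> A\<close>
      by blast
    ultimately show ?thesis
      using mem_localization_if_mem_radical[OF S] by blast
  qed
  ultimately show ?thesis
    using S by (auto simp: is_localization_def)
qed

lemma radical_elt_colon_principal_if_all_localizations:
  assumes "\<forall>B. is_sublocalization A B \<longrightarrow> is_localization A B"
  shows "\<exists>t\<in>A. radical A (elt_colon A x) = radical A (principal_ideal A t)"
proof -
  define \<F> where "\<F> = {localization A (range ((^) s)) | s. s \<in> elt_colon A x \<and> s \<noteq> 0}"
  have "\<forall>C\<in>\<F>. is_localization A C"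
    using mult_closed_powers by (auto simp: is_localization_def \<F>_def elt_colon_def)
  then have "is_sublocalization A (\<Inter>\<F>)"
    unfolding is_sublocalization_def by blast
  then obtain T where T: "mult_closed_nonzero A T" "\<Inter>\<F> = localization A T"
    using assms by (auto simp: is_localization_def)
  have "x \<in> localization A T"
    using T(2) mem_localization_powers by (auto simp: \<F>_def)
  then obtain t where t: "t \<in> T" "t \<in> elt_colon A x"
    using localization_denominator[OF T(1)] by blast
  have "1 / t \<in> \<Inter>\<F>"
    unfolding T(2) localization_def using t(1) subring_one by blast
  have "s \<in> radical A (principal_ideal A t)" if "s \<in> elt_colon A x" for s
  proof (cases "s = 0")
    case True
    then show ?thesis
      using subring_zero power_one_right[of 0] by (force simp: radical_def principal_ideal_def)
  next
    case False
    then have "1 / t \<in> localization A (range ((^) s))"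
      using \<open>1 / t \<in> \<Inter>\<F>\<close> that by (auto simp: \<F>_def)
    then obtain c n where "1 / t = c / s ^ n" "c \<in> A"
      by (auto simp: localization_def)
    then have "s ^ n = t * c"
      using False mult_closed_nonzeroD[OF T(1) t(1)] by (auto simp: field_simps)
    then show ?thesis
      using that \<open>c \<in> A\<close> by (auto simp: radical_def principal_ideal_def elt_colon_def)
  qed
  then show ?thesis
    using radical_eq_radical_principal[OF elt_colon_is_ideal t(2)] t mult_closed_nonzeroD[OF T(1)]
    by blast
qed

end

section \<open>Associated primes of principal ideals\<close>

lemma ideal_colon_principal_eq_elt_colon:
  assumes "a \<noteq> 0"
  shows "ideal_colon A (principal_ideal A a) b = elt_colon A (b / a)"
proof -
  have "r * b \<in> principal_ideal A a \<longleftrightarrow> r * (b / a) \<in> A" for r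
  proof -
    have "r * b = a * c \<longleftrightarrow> r * (b / a) = c" for c
      using assms by (auto simp: field_simps)
    then show ?thesis
      by (auto simp: principal_ideal_def)
  qed
  then show ?thesis
    by (auto simp: ideal_colon_def elt_colon_def)
qed

lemma minimal_prime_over_elt_colon_associated:
  assumes "a \<noteq> 0" and "b \<in> A" and "minimal_prime_over A (elt_colon A (b / a)) P"
  shows "associated_prime A (principal_ideal A a) P"
  unfolding associated_prime_def
  using assms ideal_colon_principal_eq_elt_colon[OF assms(1)] by metis

lemma mono_finite_range_has_greatest:
  fixes f :: "nat \<Rightarrow> 'a::order"
  assumes "mono f" and "finite (range f)"
  shows "\<exists>M. \<forall>m. f m \<le> f M"
proof -
  obtain M where M: "\<forall>m. f M \<le> f m \<longrightarrow> f M = f m"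
    using finite_has_maximal[OF assms(2)] by blast
  have "f m \<le> f M" for m
    using M[rule_format, of "max m M"] monoD[OF assms(1), of m "max m M"]
      monoD[OF assms(1), of M "max m M"] by simp
  then show ?thesis
    by blast
qed

context subring_of_field
begin

lemma radical_principal_one: "radical A (principal_ideal A 1) = A"
  using subset_radical[OF principal_ideal_subset[OF subring_one]]
  by (auto simp: radical_def principal_ideal_def)

lemma radical_principal_mult:
  assumes "a \<in> A" and "b \<in> A"
  shows "radical A (principal_ideal A (a * b)) =
    radical A (principal_ideal A a) \<inter> radical A (principal_ideal A b)"
proof (intro equalityI subsetI IntI)
  fix r assume "r \<in> radical A (principal_ideal A (a * b))"
  then obtain n c where "r \<in> A" "r ^ n = a * (b * c)" "r ^ n = b * (a * c)" "c \<in> A"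
    by (auto simp: radical_def principal_ideal_def algebra_simps)
  then show "r \<in> radical A (principal_ideal A a)" "r \<in> radical A (principal_ideal A b)"
    unfolding radical_def principal_ideal_def using assms subring_mult by blast+
next
  fix r assume "r \<in> radical A (principal_ideal A a) \<inter> radical A (principal_ideal A b)"
  then obtain n m c d where "r \<in> A" "r ^ n = a * c" "r ^ m = b * d" "c \<in> A" "d \<in> A"
    by (auto simp: radical_def principal_ideal_def)
  moreover from this have "r ^ (n + m) = a * b * (c * d)"
    by (simp add: power_add algebra_simps)
  ultimately show "r \<in> radical A (principal_ideal A (a * b))"
    using subring_mult by (auto simp: radical_def principal_ideal_def)
qed

lemma radical_principal_prod:
  assumes "finite I" and "\<And>i. i \<in> I \<Longrightarrow> u i \<in> A"
  shows "radical A (principal_ideal A (prod u I)) =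
    A \<inter> (\<Inter>i\<in>I. radical A (principal_ideal A (u i)))"
  using assms
proof (induction I rule: finite_induct)
  case empty
  then show ?case
    by (simp add: radical_principal_one)
next
  case (insert i I)
  then show ?case
    using radical_principal_mult[of "u i" "prod u I"] subring_prod[of I u]
    by (auto simp: radical_def)
qed

lemma radical_elt_colon_principal_if_associated_primes:
  assumes "is_fraction_field_of A"
    and fin: "\<forall>a\<in>A. finite {P. associated_prime A (principal_ideal A a) P}"
    and ass: "\<forall>a\<in>A. \<forall>P. associated_prime A (principal_ideal A a) P \<longrightarrow>
      (\<exists>b\<in>A. P = radical A (principal_ideal A b))"
  shows "\<exists>u\<in>A. radical A (elt_colon A x) = radical A (principal_ideal A u)"
proof -
  obtain p q where "p \<in> A" "q \<in> A" "q \<noteq> 0" "x = p / q"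
    using assms(1) unfolding is_fraction_field_of_def by blast
  define \<M> where "\<M> = {P. minimal_prime_over A (elt_colon A x) P}"
  have \<M>_ass: "\<M> \<subseteq> {P. associated_prime A (principal_ideal A q) P}"
    using minimal_prime_over_elt_colon_associated[OF \<open>q \<noteq> 0\<close> \<open>p \<in> A\<close>] \<open>x = p / q\<close>
    by (auto simp: \<M>_def)
  then have "finite \<M>"
    using fin \<open>q \<in> A\<close> finite_subset by blast
  have "\<forall>P\<in>\<M>. \<exists>v. v \<in> A \<and> P = radical A (principal_ideal A v)"
    using ass \<M>_ass \<open>q \<in> A\<close> by blast
  then obtain u where u: "\<And>P. P \<in> \<M> \<Longrightarrow> u P \<in> A \<and> P = radical A (principal_ideal A (u P))"
    by metis
  have "radical A (elt_colon A x) = A \<inter> \<Inter>\<M>"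
    unfolding \<M>_def using radical_eq_Inter_minimal_primes[OF elt_colon_is_ideal] .
  also have "\<dots> = A \<inter> (\<Inter>P\<in>\<M>. radical A (principal_ideal A (u P)))"
    using INF_cong[OF refl, of \<M> "\<lambda>P. P" "\<lambda>P. radical A (principal_ideal A (u P))"] u by simp
  also have "\<dots> = radical A (principal_ideal A (prod u \<M>))"
    using radical_principal_prod[OF \<open>finite \<M>\<close>] u by simp
  finally have "radical A (elt_colon A x) = radical A (principal_ideal A (prod u \<M>))" .
  moreover have "prod u \<M> \<in> A"
    using u by (intro subring_prod) blast
  ultimately show ?thesis
    by blast
qed

lemma radical_elt_colon_mult_mono:
  assumes "c \<in> A"
  shows "radical A (elt_colon A y) \<subseteq> radical A (elt_colon A (c * y))"
proof
  fix r assume "r \<in> radical A (elt_colon A y)"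
  then obtain n where "r \<in> A" "r ^ n * y \<in> A"
    using subring_power by (auto simp: radical_def elt_colon_def)
  then have "r ^ n * (c * y) \<in> A"
    using subring_mult[OF assms] by (metis mult.left_commute)
  then show "r \<in> radical A (elt_colon A (c * y))"
    using \<open>r \<in> A\<close> subring_power by (auto simp: radical_def elt_colon_def)
qed

lemma radical_elt_colon_mult_subset_prime:
  assumes "is_prime_ideal A P" and "elt_colon A y \<subseteq> P" and "c \<in> A - P"
  shows "radical A (elt_colon A (c * y)) \<subseteq> P"
proof
  fix r assume "r \<in> radical A (elt_colon A (c * y))"
  then obtain n where "r \<in> A" "r ^ n * c * y \<in> A"
    by (auto simp: radical_def elt_colon_def mult.assoc)
  then have "r ^ n * c \<in> P"
    using assms(2,3) subring_mult subring_power by (auto simp: elt_colon_def)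
  then show "r \<in> P"
    using prime_ideal_mult[OF assms(1)] prime_ideal_power[OF assms(1) \<open>r \<in> A\<close>] assms(3)
      subring_power \<open>r \<in> A\<close> by blast
qed

lemma minimal_prime_subset_Union_radical_elt_colon:
  assumes P: "minimal_prime_over A (elt_colon A x) P" and "c \<in> A"
    and others: "\<And>Q. minimal_prime_over A (elt_colon A x) Q \<Longrightarrow> Q \<noteq> P \<Longrightarrow> c \<in> Q"
  shows "P \<subseteq> (\<Union>n. radical A (elt_colon A (c ^ n * x)))"
proof
  fix r assume "r \<in> P"
  then have "r \<in> A"
    using P ideal_subset prime_ideal_is_ideal by (fastforce simp: minimal_prime_over_def)
  have "r * c \<in> Q" if Q: "minimal_prime_over A (elt_colon A x) Q" for Q
  proof -
    have Q_ideal: "is_ideal A Q"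
      using Q prime_ideal_is_ideal by (auto simp: minimal_prime_over_def)
    show ?thesis
    proof (cases "Q = P")
      case True
      then show ?thesis
        using ideal_mult_right[OF Q_ideal \<open>c \<in> A\<close>] \<open>r \<in> P\<close> by simp
    next
      case False
      then show ?thesis
        using ideal_mult_left[OF Q_ideal \<open>r \<in> A\<close> others[OF Q]] by simp
    qed
  qed
  then have "r * c \<in> radical A (elt_colon A x)"
    using radical_eq_Inter_minimal_primes[OF elt_colon_is_ideal] \<open>r \<in> A\<close> \<open>c \<in> A\<close> subring_mult
    by auto
  then obtain n where "(r * c) ^ n * x \<in> A"
    by (auto simp: radical_def elt_colon_def)
  then have "r ^ n * (c ^ n * x) \<in> A"
    by (simp add: power_mult_distrib mult.assoc)
  then show "r \<in> (\<Union>n. radical A (elt_colon A (c ^ n * x)))"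
    using \<open>r \<in> A\<close> subring_power by (auto simp: radical_def elt_colon_def)
qed

lemma minimal_prime_eq_radical_elt_colon:
  assumes fin: "finite \<AA>"
    and min_in: "\<And>d. d \<in> A \<Longrightarrow> {Q. minimal_prime_over A (elt_colon A (d * x)) Q} \<subseteq> \<AA>"
    and P: "minimal_prime_over A (elt_colon A x) P"
  shows "\<exists>y. y \<notin> A \<and> P = radical A (elt_colon A y)"
proof -
  have P_prime: "is_prime_ideal A P" and "elt_colon A x \<subseteq> P"
    using P by (auto simp: minimal_prime_over_def)
  have "finite {Q. minimal_prime_over A (elt_colon A x) Q}"
    using min_in[OF subring_one] fin finite_subset by auto
  then obtain c where c: "c \<in> A - P"
    "\<And>Q. minimal_prime_over A (elt_colon A x) Q \<Longrightarrow> Q \<noteq> P \<Longrightarrow> c \<in> Q"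
    using exists_mem_other_minimal_primes[OF _ P] by blast
  \<comment> \<open>An increasing chain of radicals inside P which exhausts P and takes finitely many values.\<close>
  define f where "f m = radical A (elt_colon A (c ^ m * x))" for m
  have "mono f"
    unfolding mono_iff_le_Suc f_def
    using radical_elt_colon_mult_mono c(1) by (simp add: mult.assoc)
  moreover have "f m \<in> (\<lambda>\<N>. A \<inter> \<Inter>\<N>) ` Pow \<AA>" for m
    using radical_eq_Inter_minimal_primes[OF elt_colon_is_ideal, of "c ^ m * x"]
      min_in[OF subring_power[of c m]] c(1) unfolding f_def by blast
  then have "finite (range f)"
    using fin finite_subset[of "range f"] by blast
  ultimately obtain M where M: "\<And>m. f m \<subseteq> f M"
    using mono_finite_range_has_greatest by blast
  have "c ^ M \<in> A - P"
    using prime_ideal_power[OF P_prime] subring_power c(1) by blast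
  then have "f M \<subseteq> P"
    unfolding f_def by (rule radical_elt_colon_mult_subset_prime[OF P_prime \<open>elt_colon A x \<subseteq> P\<close>])
  moreover have "P \<subseteq> (\<Union>n. f n)"
    unfolding f_def using minimal_prime_subset_Union_radical_elt_colon[OF P] c by blast
  then have "P \<subseteq> f M"
    using M by blast
  ultimately have "P = f M"
    by blast
  moreover have "c ^ M * x \<notin> A"
    using \<open>P = f M\<close> prime_ideal_one_notin[OF P_prime] subring_one
    by (auto simp: f_def radical_def elt_colon_def)
  ultimately show ?thesis
    unfolding f_def by blast
qed

lemma associated_prime_principal_zero:
  assumes "associated_prime A (principal_ideal A 0) P"
  shows "P = {0}"
proof -
  obtain b where "b \<in> A" and P: "minimal_prime_over A (ideal_colon A (principal_ideal A 0) b) P"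
    using assms by (auto simp: associated_prime_def)
  have "principal_ideal A 0 = {0}"
    using subring_zero by (auto simp: principal_ideal_def)
  then have colon: "ideal_colon A (principal_ideal A 0) b = (if b = 0 then A else {0})"
    using subring_zero by (auto simp: ideal_colon_def)
  have "b \<noteq> 0"
    using P prime_ideal_one_notin subring_one by (auto simp: colon minimal_prime_over_def)
  then show ?thesis
    using P zero_is_prime_ideal by (auto simp: colon minimal_prime_over_def)
qed

lemma associated_prime_eq_radical_principal:
  assumes fin: "finite {P. associated_prime A (principal_ideal A a) P}"
    and rad: "\<And>x. x \<notin> A \<Longrightarrow> \<exists>b\<in>A. radical A (elt_colon A x) = radical A (principal_ideal A b)"
    and P: "associated_prime A (principal_ideal A a) P"
  shows "\<exists>b\<in>A. P = radical A (principal_ideal A b)"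
proof (cases "a = 0")
  case True
  have "radical A (principal_ideal A 0) = {0}"
    using subring_zero by (auto simp: radical_def principal_ideal_def)
  then show ?thesis
    using associated_prime_principal_zero P True subring_zero by blast
next
  case False
  obtain b where "b \<in> A" and "minimal_prime_over A (elt_colon A (b / a)) P"
    using P ideal_colon_principal_eq_elt_colon[OF False] by (auto simp: associated_prime_def)
  moreover have "{Q. minimal_prime_over A (elt_colon A (d * (b / a))) Q} \<subseteq>
      {P. associated_prime A (principal_ideal A a) P}" if "d \<in> A" for d
    using minimal_prime_over_elt_colon_associated[OF False subring_mult[OF that \<open>b \<in> A\<close>]]
    by auto
  ultimately obtain y where "y \<notin> A" "P = radical A (elt_colon A y)"
    using minimal_prime_eq_radical_elt_colon[OF fin] by blast
  then show ?thesis
    using rad by metis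
qed

end

theorem theorem2p5:
  fixes A :: "'k::field set"
  assumes "is_subring A" and "is_fraction_field_of A"
  shows "((\<forall>B. is_sublocalization A B \<longrightarrow> is_localization A B) \<longleftrightarrow>
           (\<forall>x. x \<notin> A \<longrightarrow>
              (\<exists>a\<in>A. radical A (elt_colon A x) = radical A (principal_ideal A a))))
       \<and> ((\<forall>a\<in>A. finite {P. associated_prime A (principal_ideal A a) P}) \<longrightarrow>
           ((\<forall>B. is_sublocalization A B \<longrightarrow> is_localization A B) \<longleftrightarrow>
            (\<forall>a\<in>A. \<forall>P. associated_prime A (principal_ideal A a) P \<longrightarrow>
               (\<exists>b\<in>A. P = radical A (principal_ideal A b)))))"
proof -
  interpret subring_of_field A
    by (rule subring_of_field.intro) (fact assms(1))
  have "(\<forall>B. is_sublocalization A B \<longrightarrow> is_localization A B) \<longleftrightarrow>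
      (\<forall>x. x \<notin> A \<longrightarrow> (\<exists>a\<in>A. radical A (elt_colon A x) = radical A (principal_ideal A a)))"
    using is_localization_if_radical_elt_colon_principal[OF assms(2)]
      radical_elt_colon_principal_if_all_localizations by blast
  moreover have "(\<forall>x. x \<notin> A \<longrightarrow>
        (\<exists>a\<in>A. radical A (elt_colon A x) = radical A (principal_ideal A a))) \<longleftrightarrow>
      (\<forall>a\<in>A. \<forall>P. associated_prime A (principal_ideal A a) P \<longrightarrow>
        (\<exists>b\<in>A. P = radical A (principal_ideal A b)))"
    if fin: "\<forall>a\<in>A. finite {P. associated_prime A (principal_ideal A a) P}"
    using radical_elt_colon_principal_if_associated_primes[OF assms(2) fin]
      associated_prime_eq_radical_principal fin by blast
  ultimately show ?thesis
    by blast
qed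

end
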